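(* For $n\ge 2$, the letter in position $idx$ ($1\le idx\le 2\cdot4^{n-2}-1$) of the Koch code $w_n$ equals $1$ if and only if $$idx=4^{i}(2k-1)\quad\text{for some } i\in\{0,1,\dots,n-2\},\ k\in\{1,2,\dots,4^{\,n-2-i}\}.$$ Consequently $w_n$ contains exactly $\frac{4^{n-1}-1}{3}$ letters $1$ and exactly $\frac{2(4^{n-2}-1)}{3}$ letters $0$.
   Context: Let $R_\theta$ denote counterclockwise rotation of $\mathbb R^2$ by the angle $\theta$. The standard Koch curve at step $n$ is the polygon $K_n$ with vertices $r_1,\dots,r_{4^{n-1}+1}$ defined recursively: $K_1$ has vertices $(0,0),(1,0)$; $K_{n+1}$ is obtained from $K_n$ by replacing each edge from $p$ to $q$, in order, by the four edges through the points $p,\ p+\tfrac13(q-p),\ p+\tfrac13(q-p)+\tfrac13R_{\pi/3}(q-p),\ p+\tfrac23(q-p),\ q$, and numbering the resulting vertices consecutively starting from $(0,0)$. A vertex $r_i$ ($2\le i\le 4^{n-1}$) is a sharp point if the angle $\angle r_{i-1}r_ir_{i+1}$ equals $\pi/3$. For $n\ge 2$ the Koch code at step $n$ is the word $w_n=c_1\cdots c_{2\cdot4^{n-2}-1}$ over $\{0,1\}$ with $c_k=1$ iff $r_{2k+1}$ is a sharp point of $K_n$. (Equivalently, $w_2=1$ and $w_{n+1}=w_n0w_n1w_n0w_n$.) *)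

theory Defs
  imports "HOL-Analysis.Analysis"
begin

text \<open>Points of the plane are represented as complex numbers; counterclockwise
rotation by pi/3 is multiplication by cis (pi/3).\<close>

definition koch_edge :: "complex \<Rightarrow> complex \<Rightarrow> complex list" where
  "koch_edge p q =
     [p, p + (q - p) / 3, p + (q - p) / 3 + cis (pi / 3) * ((q - p) / 3), p + 2 * (q - p) / 3]"

fun koch_refine :: "complex list \<Rightarrow> complex list" where
  "koch_refine [] = []"
| "koch_refine [q] = [q]"
| "koch_refine (p # q # rest) = koch_edge p q @ koch_refine (q # rest)"

text \<open>Vertex list of the Koch curve K_n (index 0 unused, set equal to K_1).\<close>
fun koch_curve :: "nat \<Rightarrow> complex list" where
  "koch_curve 0 = [0, 1]"
| "koch_curve (Suc 0) = [0, 1]"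
| "koch_curve (Suc (Suc n)) = koch_refine (koch_curve (Suc n))"

text \<open>The vertex r_i (1-based) of K_n.\<close>
definition koch_vertex :: "nat \<Rightarrow> nat \<Rightarrow> complex" where
  "koch_vertex n i = koch_curve n ! (i - 1)"

definition pt_angle :: "complex \<Rightarrow> complex \<Rightarrow> complex \<Rightarrow> real" where
  "pt_angle a b c = arccos (inner (a - b) (c - b) / (norm (a - b) * norm (c - b)))"

definition sharp_point :: "nat \<Rightarrow> nat \<Rightarrow> bool" where
  "sharp_point n i \<longleftrightarrow> 2 \<le> i \<and> i \<le> 4 ^ (n - 1) \<and>
     pt_angle (koch_vertex n (i - 1)) (koch_vertex n i) (koch_vertex n (i + 1)) = pi / 3"

definition koch_code :: "nat \<Rightarrow> nat list" where
  "koch_code n = map (\<lambda>k. if sharp_point n (2 * k + 1) then 1 else 0) [1 ..< 2 * 4 ^ (n - 2)]"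

end

theory Submission
  imports Defs
begin

text \<open>Write the edges of \<open>K\<^sub>n\<close> as complex numbers \<open>e\<^sub>0, e\<^sub>1, \<dots>\<close>. Refining an edge \<open>e\<close>
  produces the edges \<open>e/3, e\<omega>/3, e(1-\<omega>)/3, e/3\<close> with \<open>\<omega> = cis(\<pi>/3)\<close>, so every quotient
  \<open>e\<^sub>v / e\<^sub>v\<^sub>-\<^sub>1\<close> is either \<open>\<omega>\<close> (angle \<open>2\<pi>/3\<close> at the vertex) or \<open>(1-\<omega>)/\<omega> = cis(-2\<pi>/3)\<close>
  (angle \<open>\<pi>/3\<close>, a sharp point). Following the refinement, the second case occurs exactly at
  the indices \<open>v = 4\<^sup>i(4j+2)\<close>. The code reads these at \<open>v = 2\<cdot>idx\<close>, which gives
  \<open>idx = 4\<^sup>i(2k-1)\<close>; since membership in this set is unchanged by adding multiples of \<open>4\<^sup>m\<close> to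
  \<open>v < 4\<^sup>m\<close>, the code also satisfies \<open>w\<^sub>n\<^sub>+\<^sub>1 = w\<^sub>n0w\<^sub>n1w\<^sub>n0w\<^sub>n\<close>, from which the letters are counted.\<close>

subsection \<open>The indices of sharp turns\<close>

fun sharp_index :: "nat \<Rightarrow> bool" where
  "sharp_index v =
     (if v = 0 then False
      else if v mod 4 = 2 then True
      else if v mod 4 = 0 then sharp_index (v div 4)
      else False)"

declare sharp_index.simps [simp del]

lemma sharp_index_times_4: "m \<noteq> 0 \<Longrightarrow> sharp_index (4 * m) = sharp_index m"
  by (subst sharp_index.simps) simp

lemma sharp_index_4_plus_1: "\<not> sharp_index (4 * m + 1)"
  by (subst sharp_index.simps) simp

lemma sharp_index_4_plus_2: "sharp_index (4 * m + 2)"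
proof -
  have "(4 * m + 2) mod 4 = (2::nat)" by presburger
  then show ?thesis by (subst sharp_index.simps) simp
qed

lemma sharp_index_4_plus_3: "\<not> sharp_index (4 * m + 3)"
  by (subst sharp_index.simps) simp

lemma sharp_index_mult_power_4: "x \<noteq> 0 \<Longrightarrow> sharp_index (x * 4 ^ p) = sharp_index x"
proof (induction p)
  case (Suc p)
  then show ?case using sharp_index_times_4[of "x * 4 ^ p"] by (simp add: mult.left_commute)
qed simp

lemma sharp_index_add_mult_power_4:
  "x \<noteq> 0 \<Longrightarrow> x < 4 ^ p \<Longrightarrow> sharp_index (x + j * 4 ^ p) = sharp_index x"
proof (induction p arbitrary: x)
  case (Suc p)
  have e: "x + j * 4 ^ Suc p = x + (j * 4 ^ p) * 4" by (simp add: mult_ac)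
  have mod4: "(x + j * 4 ^ Suc p) mod 4 = x mod 4" unfolding e by (rule mod_mult_self1)
  have div4: "(x + j * 4 ^ Suc p) div 4 = x div 4 + j * 4 ^ p" unfolding e by simp
  show ?case
  proof (cases "x mod 4 = 0")
    case True
    with Suc.prems have "x div 4 \<noteq> 0" "x div 4 < 4 ^ p" by auto
    then have "sharp_index (x div 4 + j * 4 ^ p) = sharp_index (x div 4)" using Suc.IH by blast
    then show ?thesis using True Suc.prems mod4 div4 by (subst (1 2) sharp_index.simps) simp
  next
    case False
    then show ?thesis using Suc.prems mod4 by (subst (1 2) sharp_index.simps) simp
  qed
qed simp

lemma mod_4_eq_2_neq_power_4_times_odd:
  fixes x :: nat
  assumes "x mod 4 = 2"
  shows "x \<noteq> 4 ^ i * (2 * k - 1)"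
proof (cases i)
  case 0
  with assms show ?thesis by (simp; presburger)
next
  case (Suc i')
  then have "4 ^ i * (2 * k - 1) mod 4 = 0" by simp
  with assms show ?thesis by auto
qed

lemma times_4_eq_power_4_times_odd_iff:
  fixes z :: nat
  shows "(\<exists>i k. 1 \<le> k \<and> 4 * z = 4 ^ i * (2 * k - 1)) \<longleftrightarrow> (\<exists>i k. 1 \<le> k \<and> z = 4 ^ i * (2 * k - 1))"
proof
  assume "\<exists>i k. 1 \<le> k \<and> 4 * z = 4 ^ i * (2 * k - 1)"
  then obtain i k where ik: "1 \<le> k" "4 * z = 4 ^ i * (2 * k - 1)" by blast
  then obtain i' where "i = Suc i'" by (cases i) (auto, presburger)
  with ik show "\<exists>i k. 1 \<le> k \<and> z = 4 ^ i * (2 * k - 1)" by auto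
next
  assume "\<exists>i k. 1 \<le> k \<and> z = 4 ^ i * (2 * k - 1)"
  then obtain i k where "1 \<le> k" "4 * z = 4 ^ Suc i * (2 * k - 1)" by auto
  then show "\<exists>i k. 1 \<le> k \<and> 4 * z = 4 ^ i * (2 * k - 1)" by blast
qed

lemma sharp_index_double_iff:
  assumes "x \<ge> 1"
  shows "sharp_index (2 * x) \<longleftrightarrow> (\<exists>i k. 1 \<le> k \<and> x = 4 ^ i * (2 * k - 1))"
  using assms
proof (induction x rule: less_induct)
  case (less x)
  have "odd x \<or> x mod 4 = 2 \<or> x mod 4 = 0" by presburger
  then consider "odd x" | "x mod 4 = 2" | "x mod 4 = 0" by auto
  then show ?case
  proof cases
    case 1
    then have "2 * x = 4 * (x div 2) + 2" by presburger
    then have "sharp_index (2 * x)" using sharp_index_4_plus_2 by metis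
    moreover have "x = 4 ^ 0 * (2 * ((x + 1) div 2) - 1)" using 1 by simp
    moreover have "1 \<le> (x + 1) div 2" using less.prems by simp
    ultimately show ?thesis by blast
  next
    case 2
    then have "2 * x = 4 * (x div 2)" "x div 2 \<noteq> 0" "(x div 2) mod 4 = 1 \<or> (x div 2) mod 4 = 3"
      by presburger+
    moreover have "\<not> sharp_index (x div 2)"
      using \<open>(x div 2) mod 4 = 1 \<or> (x div 2) mod 4 = 3\<close> by (subst sharp_index.simps) auto
    ultimately have "\<not> sharp_index (2 * x)" by (metis sharp_index_times_4)
    with 2 show ?thesis using mod_4_eq_2_neq_power_4_times_odd by blast
  next
    case 3
    then obtain z where x: "x = 4 * z" by auto
    with less.prems have z: "1 \<le> z" "z < x" by auto
    have "sharp_index (2 * x) = sharp_index (2 * z)"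
      using x z sharp_index_times_4[of "2 * z"] by (simp add: mult.left_commute)
    also have "\<dots> \<longleftrightarrow> (\<exists>i k. 1 \<le> k \<and> z = 4 ^ i * (2 * k - 1))" using less.IH z by blast
    finally show ?thesis unfolding x times_4_eq_power_4_times_odd_iff .
  qed
qed

lemma power_4_odd_bounds:
  fixes x m k i :: nat
  assumes "x < 2 * 4 ^ m" "1 \<le> k" "x = 4 ^ i * (2 * k - 1)"
  shows "i \<le> m \<and> k \<le> 4 ^ (m - i)"
proof -
  have "4 ^ i \<le> x" using assms(2,3) by simp
  then have "(4::nat) ^ i < 4 ^ Suc m" using assms(1) by simp
  then have "i < Suc m" by (rule power_less_imp_less_exp[rotated]) simp
  then have im: "i \<le> m" by simp
  then have "(4::nat) ^ m = 4 ^ i * 4 ^ (m - i)" by (simp flip: power_add)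
  then have "4 ^ i * (2 * k - 1) < 4 ^ i * (2 * 4 ^ (m - i))" using assms(1,3) by (simp add: mult_ac)
  then show ?thesis using im by simp
qed

subsection \<open>The edges of the Koch curve\<close>

definition koch_left :: complex where "koch_left = cis (pi / 3)"

definition koch_right :: complex where "koch_right = Complex (-1/2) (- sqrt 3 / 2)"

lemma koch_left_eq: "koch_left = Complex (1/2) (sqrt 3 / 2)"
  unfolding koch_left_def by (simp add: complex_eq_iff sin_60 cos_60)

lemma koch_left_mult_right: "koch_left * koch_right = 1 - koch_left"
  unfolding koch_left_eq koch_right_def by (simp add: complex_eq_iff algebra_simps)

lemma one_minus_koch_left_mult_koch_left: "(1 - koch_left) * koch_left = 1"
  unfolding koch_left_eq by (simp add: complex_eq_iff algebra_simps)

definition koch_turn :: "nat \<Rightarrow> complex" where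
  "koch_turn v = (if sharp_index v then koch_right else koch_left)"

lemma norm_koch_turn: "cmod (koch_turn v) = 1"
  by (simp add: koch_turn_def koch_left_def koch_right_def cmod_def power2_eq_square)

definition edge_vector :: "complex list \<Rightarrow> nat \<Rightarrow> complex" where
  "edge_vector xs v = xs ! Suc v - xs ! v"

lemma nth_Suc_eq_add_edge_vector: "xs ! Suc v = xs ! v + edge_vector xs v"
  by (simp add: edge_vector_def)

definition koch_edge_factor :: "nat \<Rightarrow> complex" where
  "koch_edge_factor r = (if r = 1 then koch_left else if r = 2 then 1 - koch_left else 1)"

lemma length_koch_refine: "xs \<noteq> [] \<Longrightarrow> length (koch_refine xs) = 4 * (length xs - 1) + 1"
  by (induction xs rule: koch_refine.induct) (auto simp: koch_edge_def)

lemma nth_koch_refine: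
  "m + 1 < length xs \<Longrightarrow> r < 4 \<Longrightarrow> koch_refine xs ! (4 * m + r) = koch_edge (xs ! m) (xs ! (m + 1)) ! r"
proof (induction xs arbitrary: m rule: koch_refine.induct)
  case (3 p q rest)
  show ?case
  proof (cases m)
    case 0
    with 3 have "r = 0 \<or> r = 1 \<or> r = 2 \<or> r = 3" by auto
    with 0 show ?thesis by (auto simp: nth_append koch_edge_def)
  next
    case (Suc m')
    with 3 show ?thesis by (simp add: nth_append koch_edge_def)
  qed
qed auto

lemma nth_koch_refine_4: "m < length xs \<Longrightarrow> koch_refine xs ! (4 * m) = xs ! m"
proof (induction xs arbitrary: m rule: koch_refine.induct)
  case (3 p q rest)
  then show ?case by (cases m) (auto simp: nth_append koch_edge_def)
qed auto

lemma edge_vector_koch_refine: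
  assumes "m + 1 < length xs" "r < 4"
  shows "edge_vector (koch_refine xs) (4 * m + r) = edge_vector xs m / 3 * koch_edge_factor r"
proof -
  have "koch_refine xs ! Suc (4 * m + r) =
      (if r = 3 then xs ! (m + 1) else koch_edge (xs ! m) (xs ! (m + 1)) ! Suc r)"
    using nth_koch_refine[OF assms(1), of "Suc r"] nth_koch_refine_4[of "m + 1" xs] assms
    by (auto simp: algebra_simps)
  moreover have "r = 0 \<or> r = 1 \<or> r = 2 \<or> r = 3" using assms(2) by auto
  ultimately show ?thesis
    using nth_koch_refine[OF assms] unfolding edge_vector_def koch_edge_factor_def koch_edge_def
    by (auto simp: field_simps koch_left_def)
qed

lemma length_koch_curve: "length (koch_curve (Suc k)) = 4 ^ k + 1"
proof (induction k)
  case (Suc k)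
  then have "koch_curve (Suc k) \<noteq> []" by auto
  with Suc show ?case by (simp add: length_koch_refine)
qed simp

lemma first_edge_koch_curve: "edge_vector (koch_curve (Suc k)) 0 = 1 / 3 ^ k"
proof (induction k)
  case (Suc k)
  have "edge_vector (koch_refine (koch_curve (Suc k))) (4 * 0 + 0) =
      edge_vector (koch_curve (Suc k)) 0 / 3 * koch_edge_factor 0"
    by (rule edge_vector_koch_refine) (simp_all add: length_koch_curve)
  with Suc show ?case by (simp add: koch_edge_factor_def)
qed (simp add: edge_vector_def)

lemma koch_edge_factor_turn:
  "r \<in> {1, 2, 3} \<Longrightarrow> koch_edge_factor r = koch_edge_factor (r - 1) * koch_turn (4 * m + r)"
  using koch_left_mult_right one_minus_koch_left_mult_koch_left
    sharp_index_4_plus_1[of m] sharp_index_4_plus_2[of m] sharp_index_4_plus_3[of m]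
  by (auto simp: koch_edge_factor_def koch_turn_def)

lemma edge_vector_koch_curve_turn:
  "1 \<le> v \<Longrightarrow> v < 4 ^ k \<Longrightarrow>
    edge_vector (koch_curve (Suc k)) v = edge_vector (koch_curve (Suc k)) (v - 1) * koch_turn v"
proof (induction k arbitrary: v)
  case (Suc k)
  define xs where "xs = koch_curve (Suc k)"
  define e where "e = edge_vector (koch_refine xs)"
  obtain m r where v: "v = 4 * m + r" "r < 4" by (metis div_mult_mod_eq mod_less_divisor zero_less_numeral mult.commute)
  have m: "m + 1 < length xs" using Suc.prems v by (auto simp: xs_def length_koch_curve)
  have "e v = e (v - 1) * koch_turn v"
  proof (cases "r = 0")
    case True
    with Suc.prems v have m0: "m \<noteq> 0" by auto
    have "e v = edge_vector xs m / 3"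
      using edge_vector_koch_refine[OF m, of 0] v True by (simp add: e_def koch_edge_factor_def)
    also have "\<dots> = edge_vector xs (m - 1) / 3 * koch_turn m"
      using Suc.IH[of m] m0 m by (simp add: xs_def length_koch_curve)
    also have "edge_vector xs (m - 1) / 3 = e (v - 1)"
    proof -
      have "v - 1 = 4 * (m - 1) + 3" using v True m0 by simp
      then show ?thesis
        using edge_vector_koch_refine[of "m - 1" xs 3] m m0 by (simp add: e_def koch_edge_factor_def)
    qed
    also have "koch_turn m = koch_turn v"
      using v True m0 sharp_index_times_4 by (simp add: koch_turn_def)
    finally show ?thesis .
  next
    case False
    then have r: "r \<in> {1, 2, 3}" "v - 1 = 4 * m + (r - 1)" using v by auto
    have "e v = edge_vector xs m / 3 * koch_edge_factor r"
      using edge_vector_koch_refine[OF m, of r] v by (simp add: e_def)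
    also have "\<dots> = edge_vector xs m / 3 * koch_edge_factor (r - 1) * koch_turn v"
      using koch_edge_factor_turn[OF r(1), of m] v by simp
    also have "edge_vector xs m / 3 * koch_edge_factor (r - 1) = e (v - 1)"
      using edge_vector_koch_refine[OF m, of "r - 1"] r v by (simp add: e_def)
    finally show ?thesis .
  qed
  then show ?case by (simp add: e_def xs_def)
qed simp

lemma edge_vector_koch_curve_nonzero: "v < 4 ^ k \<Longrightarrow> edge_vector (koch_curve (Suc k)) v \<noteq> 0"
proof (induction v)
  case (Suc v)
  have "koch_turn (Suc v) \<noteq> 0" using norm_koch_turn[of "Suc v"] by auto
  with Suc show ?case by (simp add: edge_vector_koch_curve_turn)
qed (simp add: first_edge_koch_curve)

subsection \<open>Sharp points\<close>

lemma pt_angle_turn: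
  assumes "e \<noteq> 0" "cmod p = 1"
  shows "pt_angle (b - e) b (b + e * p) = arccos (- Re p)"
proof -
  have "inner (b - e - b) (b + e * p - b) = - Re p * (cmod e)\<^sup>2"
    unfolding inner_complex_def cmod_power2 by (simp add: algebra_simps power2_eq_square)
  moreover have "norm (b - e - b) * norm (b + e * p - b) = (cmod e)\<^sup>2"
    using assms(2) by (simp add: norm_mult power2_eq_square)
  ultimately show ?thesis using assms(1) by (simp add: pt_angle_def)
qed

lemma arccos_koch_turn: "arccos (- Re (koch_turn v)) = pi / 3 \<longleftrightarrow> sharp_index v"
proof -
  have "arccos (1 / 2) = pi / 3" using arccos_cos[of "pi / 3"] cos_60 by simp
  moreover have "arccos (- 1 / 2) \<noteq> pi / 3"
    using cos_arccos[of "- 1 / 2"] cos_60 by force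
  ultimately show ?thesis by (simp add: koch_turn_def koch_left_eq koch_right_def)
qed

lemma sharp_point_iff_sharp_index:
  assumes "1 \<le> v" "v < 4 ^ k"
  shows "sharp_point (Suc k) (v + 1) \<longleftrightarrow> sharp_index v"
proof -
  define xs where "xs = koch_curve (Suc k)"
  define e where "e = edge_vector xs (v - 1)"
  have "koch_vertex (Suc k) v = xs ! v - e"
    using assms by (simp add: koch_vertex_def edge_vector_def xs_def e_def)
  moreover have "koch_vertex (Suc k) (v + 1) = xs ! v"
    by (simp add: koch_vertex_def xs_def)
  moreover have "koch_vertex (Suc k) (v + 2) = xs ! v + e * koch_turn v"
    using edge_vector_koch_curve_turn[OF assms] assms
    by (simp add: koch_vertex_def nth_Suc_eq_add_edge_vector xs_def e_def)
  moreover have "e \<noteq> 0"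
    using edge_vector_koch_curve_nonzero[of "v - 1" k] assms by (simp add: xs_def e_def)
  ultimately have "pt_angle (koch_vertex (Suc k) v) (koch_vertex (Suc k) (v + 1))
      (koch_vertex (Suc k) (v + 2)) = arccos (- Re (koch_turn v))"
    using pt_angle_turn norm_koch_turn by simp
  then show ?thesis
    using assms arccos_koch_turn by (simp add: sharp_point_def numeral_eq_Suc)
qed

subsection \<open>The Koch code\<close>

definition sharp_word :: "nat \<Rightarrow> nat list" where
  "sharp_word m = map (\<lambda>k. if sharp_index (2 * k) then 1 else 0) [1..<2 * 4 ^ m]"

lemma koch_code_eq_sharp_word: "koch_code (Suc (Suc m)) = sharp_word m"
proof -
  have "sharp_point (Suc (Suc m)) (2 * k + 1) \<longleftrightarrow> sharp_index (2 * k)" if "k \<in> set [1..<2 * 4 ^ m]" for k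
    using sharp_point_iff_sharp_index[of "2 * k" "Suc m"] that by simp
  then show ?thesis unfolding koch_code_def sharp_word_def by (auto intro: map_cong)
qed

lemma sharp_word_0: "sharp_word 0 = [1]"
  using sharp_index_4_plus_2[of 0] by (simp add: sharp_word_def numeral_2_eq_2)

lemma map_upt_shift: "map f [a + 1..<a + M] = map (\<lambda>k. f (k + a)) [1..<M]"
  by (rule nth_equalityI) (auto simp: algebra_simps)

lemma upt_four_blocks:
  assumes "1 \<le> M"
  shows "[1..<4 * M] = [1..<M] @ [M] @ [M + 1..<2 * M] @ [2 * M] @ [2 * M + 1..<3 * M]
      @ [3 * M] @ [3 * M + 1..<4 * M]"
proof -
  have split: "[a..<c] = [a..<b] @ [b] @ [b + 1..<c]" if "a \<le> b" "b < c" for a b c :: nat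
    using that upt_add_eq_append[of a b "c - b"] upt_conv_Cons[of b c] by simp
  have "[1..<4 * M] = [1..<M] @ [M] @ [M + 1..<4 * M]" by (rule split) (use assms in auto)
  also have "[M + 1..<4 * M] = [M + 1..<2 * M] @ [2 * M] @ [2 * M + 1..<4 * M]"
    by (rule split) (use assms in auto)
  also have "[2 * M + 1..<4 * M] = [2 * M + 1..<3 * M] @ [3 * M] @ [3 * M + 1..<4 * M]"
    by (rule split) (use assms in auto)
  finally show ?thesis .
qed

lemma sharp_word_Suc:
  "sharp_word (Suc m) = sharp_word m @ [0] @ sharp_word m @ [1] @ sharp_word m @ [0] @ sharp_word m"
proof -
  define M :: nat where "M = 2 * 4 ^ m"
  define g :: "nat \<Rightarrow> nat" where "g = (\<lambda>k. if sharp_index (2 * k) then 1 else 0)"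
  have M: "1 \<le> M" by (simp add: M_def)
  have word: "sharp_word m = map g [1..<M]" unfolding sharp_word_def g_def M_def ..
  have block: "map g [j * M + 1..<(j + 1) * M] = sharp_word m" for j
  proof -
    have "map g [j * M + 1..<(j + 1) * M] = map (\<lambda>k. g (k + j * M)) [1..<M]"
      unfolding map_upt_shift[symmetric] by (simp add: algebra_simps)
    also have "\<dots> = map g [1..<M]"
    proof (rule map_cong[OF refl])
      fix k assume "k \<in> set [1..<M]"
      then show "g (k + j * M) = g k"
        using sharp_index_add_mult_power_4[of "2 * k" "Suc m" j] by (simp add: g_def M_def algebra_simps)
    qed
    finally show ?thesis using word by simp
  qed
  have corner: "g (j * M) = (if sharp_index j then 1 else 0)" if "j \<noteq> 0" for j
  proof -
    have "2 * (j * M) = j * 4 ^ Suc m" by (simp add: M_def)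
    then have "sharp_index (2 * (j * M)) = sharp_index j"
      using sharp_index_mult_power_4[OF that, of "Suc m"] by (simp only:)
    then show ?thesis by (simp add: g_def)
  qed
  have "sharp_word (Suc m) = map g [1..<4 * M]" unfolding sharp_word_def g_def M_def by simp
  also have "\<dots> = sharp_word m @ [0] @ sharp_word m @ [1] @ sharp_word m @ [0] @ sharp_word m"
    unfolding upt_four_blocks[OF M] map_append
    using block[of 0] block[of 1] block[of 2] block[of 3] corner[of 1] corner[of 2] corner[of 3]
    by (simp add: mult_2 sharp_index.simps)
  finally show ?thesis .
qed

lemma count_sharp_word_1: "real (count_list (sharp_word m) 1) = (4 ^ Suc m - 1) / 3"
proof -
  have "3 * count_list (sharp_word m) 1 + 1 = 4 ^ Suc m"
    by (induction m) (simp_all add: sharp_word_0 sharp_word_Suc)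
  then have "real (3 * count_list (sharp_word m) 1 + 1) = real (4 ^ Suc m)" by (simp only:)
  then show ?thesis by (simp add: field_simps)
qed

lemma count_sharp_word_0: "real (count_list (sharp_word m) 0) = 2 * (4 ^ m - 1) / 3"
proof -
  have "3 * count_list (sharp_word m) 0 + 2 = 2 * 4 ^ m"
    by (induction m) (simp_all add: sharp_word_0 sharp_word_Suc)
  then have "real (3 * count_list (sharp_word m) 0 + 2) = real (2 * 4 ^ m)" by (simp only:)
  then show ?thesis by (simp add: field_simps)
qed

lemma nth_sharp_word_eq_1_iff:
  assumes "1 \<le> idx" "idx < 2 * 4 ^ m"
  shows "sharp_word m ! (idx - 1) = 1 \<longleftrightarrow>
    (\<exists>i k. i \<le> m \<and> 1 \<le> k \<and> k \<le> 4 ^ (m - i) \<and> idx = 4 ^ i * (2 * k - 1))"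
proof -
  have "sharp_word m ! (idx - 1) = 1 \<longleftrightarrow> sharp_index (2 * idx)"
    using assms by (simp add: sharp_word_def)
  also have "\<dots> \<longleftrightarrow> (\<exists>i k. 1 \<le> k \<and> idx = 4 ^ i * (2 * k - 1))"
    using sharp_index_double_iff assms(1) by blast
  also have "\<dots> \<longleftrightarrow> (\<exists>i k. i \<le> m \<and> 1 \<le> k \<and> k \<le> 4 ^ (m - i) \<and> idx = 4 ^ i * (2 * k - 1))"
    using power_4_odd_bounds[OF assms(2)] by blast
  finally show ?thesis .
qed

theorem mainTheorem4:
  fixes n :: nat
  assumes "n \<ge> 2"
  shows "(\<forall>idx. 1 \<le> idx \<and> idx \<le> 2 * 4 ^ (n - 2) - 1 \<longrightarrow>
            (koch_code n ! (idx - 1) = 1 \<longleftrightarrow>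
              (\<exists>i k. i \<le> n - 2 \<and> 1 \<le> k \<and> k \<le> 4 ^ (n - 2 - i) \<and> idx = 4 ^ i * (2 * k - 1))))
       \<and> real (count_list (koch_code n) 1) = (4 ^ (n - 1) - 1) / 3
       \<and> real (count_list (koch_code n) 0) = 2 * (4 ^ (n - 2) - 1) / 3"
proof -
  obtain m where n: "n = Suc (Suc m)" using assms by (metis add_2_eq_Suc le_Suc_ex)
  have code: "koch_code n = sharp_word m" and n_minus: "n - 2 = m" "n - 1 = Suc m"
    using n by (simp_all add: koch_code_eq_sharp_word)
  show ?thesis
    unfolding code n_minus
  proof (intro conjI allI impI)
    fix idx :: nat
    assume "1 \<le> idx \<and> idx \<le> 2 * 4 ^ m - 1"
    then show "sharp_word m ! (idx - 1) = 1 \<longleftrightarrow>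
        (\<exists>i k. i \<le> m \<and> 1 \<le> k \<and> k \<le> 4 ^ (m - i) \<and> idx = 4 ^ i * (2 * k - 1))"
      by (intro nth_sharp_word_eq_1_iff) auto
  qed (fact count_sharp_word_1 count_sharp_word_0)+
qed

end
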